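(* Let $n$ be a positive integer and consider the function $f(m)=\binom{n}{m}m^3$ defined for integers $0\le m\le n$. Then $f$ is maximized at $m=\lceil n/2\rceil+1$ if $n\ge 2$, and at $m=1$ if $n=1$. *)

theory Defs
  imports Complex_Main
begin

definition f_cube :: "nat \<Rightarrow> nat \<Rightarrow> nat" where
  "f_cube n m = (n choose m) * m ^ 3"

end

theory Submission
  imports Defs
begin

text \<open>Since \<open>f(m+1) = C(n,m) (n-m) (m+1)\<^sup>2\<close> while \<open>f(m) = C(n,m) m\<^sup>3\<close>, comparing
  consecutive values reduces to comparing \<open>m\<^sup>3\<close> with \<open>(n-m)(m+1)\<^sup>2\<close>.
  If \<open>2m \<le> n+1\<close> then \<open>n-m \<ge> m-1\<close>, and \<open>(m-1)(m+1)\<^sup>2 \<ge> m\<^sup>3\<close> for \<open>m \<ge> 2\<close>,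
  so \<open>f\<close> increases up to \<open>\<lceil>n/2\<rceil> + 1\<close>; if \<open>2m \<ge> n+2\<close> then \<open>n-m \<le> m-2\<close>,
  and \<open>(m-2)(m+1)\<^sup>2 \<le> m\<^sup>3\<close>, so \<open>f\<close> decreases from there on.\<close>

lemma le_peak_if_unimodal:
  fixes f :: "nat \<Rightarrow> 'a::order"
  assumes up: "\<And>k. k < p \<Longrightarrow> f k \<le> f (Suc k)"
    and down: "\<And>k. p \<le> k \<Longrightarrow> f (Suc k) \<le> f k"
  shows "f m \<le> f p"
proof (cases "m \<le> p")
  case True
  show ?thesis
    by (rule lift_Suc_mono_le_ivl[of "{..<p}"]) (use True up in auto)
next
  case False
  show ?thesis
    by (rule lift_Suc_antimono_le_ivl[of "{p..}"]) (use False down in auto)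
qed

lemma f_cube_Suc: "f_cube n (Suc m) = (n choose m) * ((n - m) * (Suc m)^2)"
proof -
  have "Suc m * (n choose Suc m) = (n - m) * (n choose m)"
    using binomial_absorption[of m n] binomial_absorb_comp[of n m] by simp
  then have "(n choose Suc m) * (Suc m * (Suc m)^2) = (n choose m) * ((n - m) * (Suc m)^2)"
    by (metis mult.assoc mult.commute)
  then show ?thesis
    unfolding f_cube_def by (simp only: power2_eq_square power3_eq_cube mult.assoc)
qed

lemma f_cube_le_Suc:
  assumes "2 \<le> n" and "2 * m \<le> n + 1"
  shows "f_cube n m \<le> f_cube n (Suc m)"
proof -
  have "m^3 \<le> (n - m) * (Suc m)^2"
  proof (cases "m \<le> 1")
    case True
    then show ?thesis using assms(1) by (cases m) auto
  next
    case False
    then have "2 \<le> m" by simp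
    then obtain k where m: "m = k + 2" using le_Suc_ex by (metis add.commute)
    have "m^3 \<le> (m - 1) * (Suc m)^2"
      unfolding m by (simp add: power2_eq_square power3_eq_cube algebra_simps)
    also have "\<dots> \<le> (n - m) * (Suc m)^2"
      using assms(2) by (intro mult_le_mono1) simp
    finally show ?thesis .
  qed
  then show ?thesis
    unfolding f_cube_Suc by (simp add: f_cube_def)
qed

lemma f_cube_Suc_le:
  assumes "n + 2 \<le> 2 * m"
  shows "f_cube n (Suc m) \<le> f_cube n m"
proof -
  have "(n - m) * (Suc m)^2 \<le> (m - 2) * (Suc m)^2"
    using assms by (intro mult_le_mono1) simp
  also have "\<dots> \<le> m^3"
  proof (cases "2 \<le> m")
    case True
    then obtain k where m: "m = k + 2" using le_Suc_ex by (metis add.commute)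
    show ?thesis
      unfolding m by (simp add: power2_eq_square power3_eq_cube algebra_simps)
  qed simp
  finally show ?thesis
    unfolding f_cube_Suc by (simp add: f_cube_def)
qed

lemma nat_ceiling_half: "nat \<lceil>real n / 2\<rceil> = (n + 1) div 2"
proof -
  have "\<lceil>real n / 2\<rceil> = int ((n + 1) div 2)"
    by (rule ceiling_unique) linarith+
  then show ?thesis by simp
qed

theorem proposition2:
  fixes n :: nat
  assumes "n \<ge> 1"
  defines "M \<equiv> (if n \<ge> 2 then nat \<lceil>real n / 2\<rceil> + 1 else 1)"
  shows "M \<le> n \<and> (\<forall>m \<le> n. f_cube n m \<le> f_cube n M)"
proof (cases "n \<ge> 2")
  case False
  then have "n = 1" "M = 1" using assms by (auto simp: M_def)
  moreover have "m \<le> 1 \<Longrightarrow> f_cube 1 m \<le> f_cube 1 1" for m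
    by (cases m) (auto simp: f_cube_def)
  ultimately show ?thesis by simp
next
  case True
  then have M: "M = (n + 1) div 2 + 1" by (simp add: M_def nat_ceiling_half)
  have "f_cube n m \<le> f_cube n M" for m
  proof (rule le_peak_if_unimodal[where f = "f_cube n"])
    show "f_cube n k \<le> f_cube n (Suc k)" if "k < M" for k
      using that M by (intro f_cube_le_Suc True) linarith
    show "f_cube n (Suc k) \<le> f_cube n k" if "M \<le> k" for k
      using that M by (intro f_cube_Suc_le) linarith
  qed
  moreover have "M \<le> n" using True M by linarith
  ultimately show ?thesis by simp
qed

end
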